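(* Fix $n$ and consider a model $\mathcal M$ with block hyper-$g$ prior (hyperparameter $2<a\le4$) on blocks $X_1,\dots,X_k$ ($X_j$ of size $n\times p_j$, $p=\sum_jp_j$) satisfying the block orthogonality condition. Its Bayes factor against the null (intercept-only) model $\mathcal M_0$ is $$BF(\mathcal M:\mathcal M_0)=\Big(\frac{a-2}{2}\Big)^k\int_{(0,1)^k}\prod_{j=1}^k(1-t_j)^{\frac{a+p_j}{2}-2}\Big(1-\sum_{j=1}^kt_jR_j^2\Big)^{-\frac{n-1}{2}}dt .$$ Then $BF(\mathcal M:\mathcal M_0)\to\infty$ (information consistency) under either of the following conditions: (1) $R^2=\sum_{j=1}^kR_j^2\to1$ and $n>k(a-2)+p+1$; (2) for some $i\in\{1,\dots,k\}$, $R_i^2\to1$ and $n\ge a+p_i-1$.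
   Context: Block hyper-$g$ prior: $y\mid\alpha,\beta,\sigma^2\sim N(\alpha\mathbf 1+X\beta,\sigma^2I)$, $X=(X_1,\dots,X_k)$ of full column rank; $\beta\mid g,\sigma^2\sim N(0,A\sigma^2)$ with $A$ block diagonal with blocks $g_j(X_j^TX_j)^{-1}$; $\pi(\alpha,\sigma^2)\propto1/\sigma^2$; $g_j$ independent with densities $\frac{a-2}{2}(1+g_j)^{-a/2}$. Block orthogonality condition: predictors and response centered, $X_i^TX_j=0$ for $i\neq j$. $R_j^2=y^TP_{X_j}y/y^Ty$ with $P_{X_j}$ the projection onto the column space of $X_j$; under block orthogonality $R^2=\sum_jR_j^2$ is the coefficient of determination. Information consistency means $BF(\mathcal M:\mathcal M_0)\to\infty$ whenever $R^2\to1$ for fixed $n$ (limits in the data). *)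

theory Defs
  imports "HOL-Probability.Probability"
begin

text \<open>Bayes factor of the block hyper-g model (blocks indexed by 0..k-1) against the
  intercept-only null model, as a function of the sample size n, hyperparameter a,
  block sizes p j and the block coefficients R j = R_j^2 (explicit formula of the paper).\<close>

definition unit_cube :: "nat \<Rightarrow> (nat \<Rightarrow> real) set" where
  "unit_cube k = {t. \<forall>j<k. 0 < t j \<and> t j < 1}"

definition block_hyper_g_BF ::
  "nat \<Rightarrow> real \<Rightarrow> nat \<Rightarrow> (nat \<Rightarrow> nat) \<Rightarrow> (nat \<Rightarrow> real) \<Rightarrow> ennreal" where
  "block_hyper_g_BF n a k p R =
     ennreal (((a - 2) / 2) ^ k) *
     (\<integral>\<^sup>+ t. indicator (unit_cube k) t *
         ennreal ((\<Prod>j<k. (1 - t j) powr ((a + real (p j)) / 2 - 2)) *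
                  (1 - (\<Sum>j<k. t j * R j)) powr (- (real n - 1) / 2))
       \<partial>(PiM {..<k} (\<lambda>_. lborel)))"

end

(*
  Up to the positive factor ((a-2)/2)^k the Bayes factor is the integral over the unit cube of
  prod_j (1 - t_j)^(b_j) * (1 - sum_j t_j R_j)^(-c), with b_j = (a + p_j)/2 - 2 and c = (n-1)/2.
  It is bounded below by restricting to a box.

  If d = 1 - sum_j R_j tends to 0, take the box 1 - d <= t_j <= 1 - d/2: there 1 - t_j is
  comparable to d and 1 - sum_j t_j R_j lies in [d, 2d], so the integral is at least a constant
  times d^(sum_j (b_j + 1) - c), which diverges because condition (1) says sum_j (b_j + 1) < c.

  If d = 1 - R_i tends to 0, take 1/2 <= t_i <= R_i and t_j < 1/2 for j ~= i: there
  1 - sum_j t_j R_j <= 2 (1 - t_i), so by condition (2), b_i - c <= -1, the integrand is at least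
  a constant times 1/(1 - t_i), whose integral log (1/(2d)) diverges.
*)

theory Submission
  imports Defs "HOL-Real_Asymp.Real_Asymp"
begin

definition hyper_g_integrand ::
  "nat \<Rightarrow> (nat \<Rightarrow> real) \<Rightarrow> real \<Rightarrow> (nat \<Rightarrow> real) \<Rightarrow> (nat \<Rightarrow> real) \<Rightarrow> real" where
  "hyper_g_integrand k b c R t = (\<Prod>j<k. (1 - t j) powr b j) * (1 - (\<Sum>j<k. t j * R j)) powr (-c)"

definition hyper_g_integral :: "nat \<Rightarrow> (nat \<Rightarrow> real) \<Rightarrow> real \<Rightarrow> (nat \<Rightarrow> real) \<Rightarrow> ennreal" where
  "hyper_g_integral k b c R =
     (\<integral>\<^sup>+ t. indicator (unit_cube k) t * ennreal (hyper_g_integrand k b c R t) \<partial>PiM {..<k} (\<lambda>_. lborel))"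

lemma block_hyper_g_BF_eq:
  "block_hyper_g_BF n a k p R =
     ennreal (((a - 2) / 2) ^ k) * hyper_g_integral k (\<lambda>j. (a + real (p j)) / 2 - 2) ((real n - 1) / 2) R"
  unfolding block_hyper_g_BF_def hyper_g_integral_def hyper_g_integrand_def
  by (simp add: minus_divide_left)

lemma tendsto_top_if_eventually_ge_ennreal:
  fixes X :: "'a \<Rightarrow> ennreal"
  assumes "filterlim g at_top F" "eventually (\<lambda>m. ennreal (g m) \<le> X m) F"
  shows "(X \<longlongrightarrow> top) F"
  unfolding tendsto_top_iff_ennreal
proof (intro allI impI)
  fix l :: real assume "0 \<le> l"
  have "eventually (\<lambda>m. l < g m) F"
    using assms(1) filterlim_at_top_dense by blast
  with assms(2) show "eventually (\<lambda>m. ennreal l < X m) F"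
    by eventually_elim (use \<open>0 \<le> l\<close> in \<open>metis ennreal_less_iff less_le_trans\<close>)
qed

lemma powr_ge_on_half_interval:
  fixes s d b :: real
  assumes "0 < d" "d / 2 \<le> s" "s \<le> d"
  shows "d powr b * 2 powr (-\<bar>b\<bar>) \<le> s powr b"
proof (cases "b \<ge> 0")
  case True
  have "d powr b * 2 powr (-\<bar>b\<bar>) = (d / 2) powr b"
    using True by (simp add: powr_divide powr_minus_divide)
  also have "\<dots> \<le> s powr b"
    using True assms by (intro powr_mono2) auto
  finally show ?thesis .
next
  case False
  have "2 powr (-\<bar>b\<bar>) \<le> 1"
    using powr_mono[of "-\<bar>b\<bar>" 0 2] by simp
  then have "d powr b * 2 powr (-\<bar>b\<bar>) \<le> d powr b"
    using mult_left_le[of "2 powr (-\<bar>b\<bar>)" "d powr b"] by simp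
  also have "\<dots> \<le> s powr b"
    using False assms by (intro powr_mono2') auto
  finally show ?thesis .
qed

lemma nn_integral_PiM_lborel_prod:
  fixes f :: "nat \<Rightarrow> real \<Rightarrow> ennreal"
  assumes "finite I" "\<And>i. i \<in> I \<Longrightarrow> f i \<in> borel_measurable borel"
  shows "(\<integral>\<^sup>+ x. (\<Prod>i\<in>I. f i (x i)) \<partial>PiM I (\<lambda>_. lborel)) = (\<Prod>i\<in>I. \<integral>\<^sup>+ x. f i x \<partial>lborel)"
proof -
  interpret product_sigma_finite "\<lambda>_::nat. lborel :: real measure"
    by standard
  show ?thesis
    using assms by (intro product_nn_integral_prod) auto
qed

lemma nn_integral_inverse_one_minus:
  fixes l u :: real
  assumes "l \<le> u" "u < 1"
  shows "(\<integral>\<^sup>+ x. indicator {l..u} x * ennreal (1 / (1 - x)) \<partial>lborel) = ennreal (ln (1 - l) - ln (1 - u))"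
proof -
  have "(\<integral>\<^sup>+ x. ennreal (1 / (1 - x)) * indicator {l..u} x \<partial>lborel)
      = ennreal (- ln (1 - u) - - ln (1 - l))"
  proof (rule nn_integral_FTC_Icc)
    fix x :: real assume "x \<in> {l..u}"
    then have "x < 1" using assms by auto
    then show "((\<lambda>x. - ln (1 - x)) has_real_derivative 1 / (1 - x)) (at x)"
      by (auto intro!: derivative_eq_intros simp: field_simps)
    show "0 \<le> 1 / (1 - x)" using \<open>x < 1\<close> by simp
  qed (use assms in auto)
  then show ?thesis
    by (simp add: mult.commute)
qed

lemma hyper_g_integral_ge_prod:
  fixes S :: "nat \<Rightarrow> real set" and g :: "nat \<Rightarrow> real \<Rightarrow> real"
  assumes S_sub: "\<And>j. j < k \<Longrightarrow> S j \<subseteq> {0<..<1}"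
    and S_meas: "\<And>j. j < k \<Longrightarrow> S j \<in> sets borel"
    and g_meas: "\<And>j. j < k \<Longrightarrow> g j \<in> borel_measurable borel"
    and g_nonneg: "\<And>j x. j < k \<Longrightarrow> x \<in> S j \<Longrightarrow> 0 \<le> g j x"
    and M: "0 \<le> M"
    and bound: "\<And>t. (\<And>j. j < k \<Longrightarrow> t j \<in> S j) \<Longrightarrow>
                  M * (\<Prod>j<k. g j (t j)) \<le> hyper_g_integrand k b c R t"
  shows "ennreal M * (\<Prod>j<k. \<integral>\<^sup>+ x. indicator (S j) x * ennreal (g j x) \<partial>lborel)
           \<le> hyper_g_integral k b c R"
proof -
  define f where "f = (\<lambda>j x. indicator (S j) x * ennreal (g j x))"
  have f_meas: "f j \<in> borel_measurable borel" if "j < k" for j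
    unfolding f_def using S_meas[OF that] g_meas[OF that] by measurable
  have pointwise: "ennreal M * (\<Prod>j<k. f j (t j))
      \<le> indicator (unit_cube k) t * ennreal (hyper_g_integrand k b c R t)" for t
  proof (cases "\<forall>j<k. t j \<in> S j")
    case True
    then have cube: "t \<in> unit_cube k"
      using S_sub by (force simp: unit_cube_def)
    have "(\<Prod>j<k. f j (t j)) = (\<Prod>j<k. ennreal (g j (t j)))"
      using True by (simp add: f_def)
    also have "\<dots> = ennreal (\<Prod>j<k. g j (t j))"
      using True g_nonneg by (intro prod_ennreal) auto
    finally show ?thesis
      using cube True bound g_nonneg M by (simp add: ennreal_mult'[symmetric] prod_nonneg ennreal_leI)
  next
    case False
    then obtain j where "j < k" "t j \<notin> S j" by auto
    then have "(\<Prod>j<k. f j (t j)) = 0"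
      by (intro prod_zero) (auto simp: f_def intro!: bexI[of _ j])
    then show ?thesis
      by (simp only: mult_zero_right zero_le)
  qed
  have "(\<lambda>t. f j (t j)) \<in> borel_measurable (PiM {..<k} (\<lambda>_. lborel))" if "j < k" for j
  proof -
    have "f j \<in> borel_measurable lborel"
      using f_meas[OF that] by simp
    then show ?thesis
      using that by (intro measurable_compose[OF measurable_component_singleton]) auto
  qed
  then have prod_meas: "(\<lambda>t. \<Prod>j<k. f j (t j)) \<in> borel_measurable (PiM {..<k} (\<lambda>_. lborel))"
    by (intro borel_measurable_prod_ennreal) auto
  have "ennreal M * (\<Prod>j<k. \<integral>\<^sup>+ x. f j x \<partial>lborel)
      = ennreal M * (\<integral>\<^sup>+ t. (\<Prod>j<k. f j (t j)) \<partial>PiM {..<k} (\<lambda>_. lborel))"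
    using f_meas by (subst nn_integral_PiM_lborel_prod) auto
  also have "\<dots> = (\<integral>\<^sup>+ t. ennreal M * (\<Prod>j<k. f j (t j)) \<partial>PiM {..<k} (\<lambda>_. lborel))"
    using prod_meas by (rule nn_integral_cmult[symmetric])
  also have "\<dots> \<le> hyper_g_integral k b c R"
    unfolding hyper_g_integral_def by (intro nn_integral_mono pointwise)
  finally show ?thesis
    by (simp only: f_def)
qed

lemma hyper_g_integrand_ge_joint:
  fixes R t b :: "nat \<Rightarrow> real" and c d :: real
  assumes R_nonneg: "\<And>j. j < k \<Longrightarrow> 0 \<le> R j"
    and d: "d = 1 - (\<Sum>j<k. R j)" "0 < d" and c: "0 \<le> c"
    and t: "\<And>j. j < k \<Longrightarrow> t j \<in> {1 - d..1 - d / 2}"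
  shows "(2 * d) powr (-c) * (\<Prod>j<k. d powr b j * 2 powr (-\<bar>b j\<bar>)) \<le> hyper_g_integrand k b c R t"
proof -
  have gap: "d / 2 \<le> 1 - t j" "1 - t j \<le> d" if "j < k" for j
    using t[OF that] by auto
  have factors: "(\<Prod>j<k. d powr b j * 2 powr (-\<bar>b j\<bar>)) \<le> (\<Prod>j<k. (1 - t j) powr b j)"
    using gap d by (intro prod_mono conjI powr_ge_on_half_interval) auto
  have "1 - (\<Sum>j<k. t j * R j) = d + (\<Sum>j<k. (1 - t j) * R j)"
    by (simp add: d(1) algebra_simps sum_subtractf)
  moreover have "0 \<le> (\<Sum>j<k. (1 - t j) * R j)"
    using gap R_nonneg d by (intro sum_nonneg mult_nonneg_nonneg) force+
  moreover have "(\<Sum>j<k. (1 - t j) * R j) \<le> d"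
  proof -
    have "(\<Sum>j<k. (1 - t j) * R j) \<le> (\<Sum>j<k. d * R j)"
      using gap R_nonneg by (intro sum_mono mult_right_mono) auto
    also have "\<dots> = d * (1 - d)"
      using d(1) by (simp add: sum_distrib_left[symmetric])
    also have "\<dots> \<le> d"
      using d(2) by (simp add: algebra_simps)
    finally show ?thesis .
  qed
  ultimately have "(2 * d) powr (-c) \<le> (1 - (\<Sum>j<k. t j * R j)) powr (-c)"
    using c d by (intro powr_mono2') auto
  with factors show ?thesis
    unfolding hyper_g_integrand_def
    by (subst mult.commute) (intro mult_mono prod_nonneg, auto)
qed

lemma hyper_g_integral_ge_joint:
  fixes R b :: "nat \<Rightarrow> real" and c d :: real
  assumes R_nonneg: "\<And>j. j < k \<Longrightarrow> 0 \<le> R j"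
    and d: "d = 1 - (\<Sum>j<k. R j)" "0 < d" "d < 1" and c: "0 \<le> c"
  shows "ennreal (2 powr (-c) * (\<Prod>j<k. 2 powr (-\<bar>b j\<bar>) / 2) * d powr ((\<Sum>j<k. b j + 1) - c))
           \<le> hyper_g_integral k b c R"
proof -
  define w where "w j = d powr b j * 2 powr (-\<bar>b j\<bar>)" for j
  have w_nonneg: "0 \<le> w j" for j
    unfolding w_def by simp
  have one_dim: "(\<integral>\<^sup>+ x. indicator {1 - d..1 - d / 2} x * ennreal (w j) \<partial>lborel) = ennreal (w j * (d / 2))"
    for j using d(2,3) w_nonneg
    by (simp add: mult.commute[of "indicator _ _"] nn_integral_cmult_indicator ennreal_mult[symmetric])
  have "(\<Prod>j<k. w j * (d / 2)) = (\<Prod>j<k. 2 powr (-\<bar>b j\<bar>) / 2) * (\<Prod>j<k. d powr (b j + 1))"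
    using d(2) by (simp add: w_def powr_add prod.distrib[symmetric] mult_ac)
  also have "(\<Prod>j<k. d powr (b j + 1)) = d powr (\<Sum>j<k. b j + 1)"
    using d(2) by (simp add: powr_sum)
  finally have "(2 * d) powr (-c) * (\<Prod>j<k. w j * (d / 2))
      = 2 powr (-c) * (\<Prod>j<k. 2 powr (-\<bar>b j\<bar>) / 2) * (d powr (\<Sum>j<k. b j + 1) * d powr (-c))"
    using d(2) by (simp add: powr_mult mult_ac)
  also have "d powr (\<Sum>j<k. b j + 1) * d powr (-c) = d powr ((\<Sum>j<k. b j + 1) - c)"
    by (simp add: powr_add[symmetric])
  finally have "ennreal (2 powr (-c) * (\<Prod>j<k. 2 powr (-\<bar>b j\<bar>) / 2) * d powr ((\<Sum>j<k. b j + 1) - c))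
      = ennreal ((2 * d) powr (-c) * (\<Prod>j<k. w j * (d / 2)))"
    by simp
  also have "\<dots> = ennreal ((2 * d) powr (-c)) * (\<Prod>j<k. ennreal (w j * (d / 2)))"
    using d(2) w_nonneg by (simp add: ennreal_mult prod_ennreal prod_nonneg)
  also have "\<dots> = ennreal ((2 * d) powr (-c)) *
      (\<Prod>j<k. \<integral>\<^sup>+ x. indicator {1 - d..1 - d / 2} x * ennreal (w j) \<partial>lborel)"
    by (simp only: one_dim)
  also have "\<dots> \<le> hyper_g_integral k b c R"
    using d(2,3) c hyper_g_integrand_ge_joint[OF R_nonneg d(1,2) c]
    by (intro hyper_g_integral_ge_prod) (auto simp: w_def)
  finally show ?thesis .
qed

lemma hyper_g_integrand_ge_block:
  fixes R t b :: "nat \<Rightarrow> real" and c :: real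
  assumes i: "i < k" and R_nonneg: "\<And>j. j < k \<Longrightarrow> 0 \<le> R j" and R_sum: "(\<Sum>j<k. R j) < 1"
    and c: "0 \<le> c" and bc: "b i - c \<le> -1"
    and t_i: "t i \<in> {1/2..R i}" and t_j: "\<And>j. j < k \<Longrightarrow> j \<noteq> i \<Longrightarrow> t j \<in> {0<..<1/2}"
  shows "2 powr (-c) / (1 - t i) * (\<Prod>j\<in>{..<k}-{i}. 2 powr (-\<bar>b j\<bar>)) \<le> hyper_g_integrand k b c R t"
proof -
  define s where "s = 1 - t i"
  define X where "X = 1 - (\<Sum>j<k. t j * R j)"
  have "R i \<le> (\<Sum>j<k. R j)"
    using i R_nonneg by (intro member_le_sum) auto
  then have s: "0 < 1 - R i" "1 - R i \<le> s" "s \<le> 1/2"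
    using R_sum t_i by (auto simp: s_def)
  have t_unit: "0 \<le> t j" "t j \<le> 1" if "j < k" for j
    using t_i t_j[OF that] s by (cases "j = i"; force simp: s_def)+
  have others: "(\<Prod>j\<in>{..<k}-{i}. 2 powr (-\<bar>b j\<bar>)) \<le> (\<Prod>j\<in>{..<k}-{i}. (1 - t j) powr b j)"
  proof (intro prod_mono conjI)
    fix j assume "j \<in> {..<k} - {i}"
    then have "1 powr b j * 2 powr (-\<bar>b j\<bar>) \<le> (1 - t j) powr b j"
      using t_j[of j] by (intro powr_ge_on_half_interval) auto
    then show "2 powr (-\<bar>b j\<bar>) \<le> (1 - t j) powr b j"
      by simp
  qed simp
  have "(\<Sum>j<k. t j * R j) \<le> (\<Sum>j<k. R j)"
    using t_unit R_nonneg by (intro sum_mono mult_left_le_one_le) auto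
  then have X_pos: "0 < X"
    using R_sum by (simp add: X_def)
  have "t i * R i \<le> (\<Sum>j<k. t j * R j)"
    using i t_unit R_nonneg by (intro member_le_sum[where f = "\<lambda>j. t j * R j"]) auto
  then have "X \<le> s + t i * (1 - R i)"
    by (simp add: X_def s_def algebra_simps)
  also have "\<dots> \<le> 2 * s"
    using s mult_left_le_one_le[of "1 - R i" "t i"] t_unit[OF i] by linarith
  finally have X_le: "X \<le> 2 * s" .
  have "2 powr (-c) / s = 2 powr (-c) * s powr (-1)"
    using s by (simp add: powr_minus_divide)
  also have "\<dots> \<le> 2 powr (-c) * s powr (b i - c)"
    using bc s by (intro mult_left_mono powr_mono') auto
  also have "\<dots> = s powr b i * (2 * s) powr (-c)"
    using s by (simp add: powr_mult powr_add[symmetric])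
  also have "\<dots> \<le> s powr b i * X powr (-c)"
    using X_pos X_le c by (intro mult_left_mono powr_mono2') auto
  finally have block_i: "2 powr (-c) / s \<le> s powr b i * X powr (-c)" .
  have "hyper_g_integrand k b c R t = s powr b i * X powr (-c) * (\<Prod>j\<in>{..<k}-{i}. (1 - t j) powr b j)"
    using i by (simp add: hyper_g_integrand_def prod.remove s_def X_def)
  moreover have "2 powr (-c) / s * (\<Prod>j\<in>{..<k}-{i}. 2 powr (-\<bar>b j\<bar>))
      \<le> s powr b i * X powr (-c) * (\<Prod>j\<in>{..<k}-{i}. (1 - t j) powr b j)"
    using block_i others s by (intro mult_mono prod_nonneg) auto
  ultimately show ?thesis
    by (simp add: s_def)
qed

lemma hyper_g_integral_ge_block:
  fixes R b :: "nat \<Rightarrow> real" and c :: real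
  assumes i: "i < k" and R_nonneg: "\<And>j. j < k \<Longrightarrow> 0 \<le> R j" and R_sum: "(\<Sum>j<k. R j) < 1"
    and R_i: "1/2 \<le> R i" and c: "0 \<le> c" and bc: "b i - c \<le> -1"
  shows "ennreal (2 powr (-c) * (\<Prod>j\<in>{..<k}-{i}. 2 powr (-\<bar>b j\<bar>) / 2) * (- ln (1 - R i) - ln 2))
           \<le> hyper_g_integral k b c R"
proof -
  define S where "S j = (if j = i then {1/2..R i} else {0<..<1/2})" for j
  define g where "g j x = (if j = i then 1 / (1 - x) else 2 powr (-\<bar>b j\<bar>))" for j x
  have "R i \<le> (\<Sum>j<k. R j)"
    using i R_nonneg by (intro member_le_sum) auto
  then have R_i_lt: "R i < 1"
    using R_sum by linarith
  have "ln (1 - 1/2) - ln (1 - R i) = - ln (1 - R i) - ln (2::real)"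
    by (simp add: ln_div)
  moreover have "(\<integral>\<^sup>+ x. indicator (S i) x * ennreal (g i x) \<partial>lborel) = ennreal (ln (1 - 1/2) - ln (1 - R i))"
    unfolding S_def g_def using R_i R_i_lt
    by (simp only: simp_thms if_True, intro nn_integral_inverse_one_minus) auto
  ultimately have one_dim_i:
    "(\<integral>\<^sup>+ x. indicator (S i) x * ennreal (g i x) \<partial>lborel) = ennreal (- ln (1 - R i) - ln 2)"
    by (simp only:)
  have one_dim_j: "(\<integral>\<^sup>+ x. indicator (S j) x * ennreal (g j x) \<partial>lborel) = ennreal (2 powr (-\<bar>b j\<bar>) / 2)"
    if "j \<noteq> i" for j
    using that by (simp add: S_def g_def mult.commute[of "indicator _ _"] nn_integral_cmult_indicator
                             divide_ennreal[symmetric] divide_ennreal_def)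
  have "ln (1 - R i) \<le> ln (1/2)"
    using R_i R_i_lt by simp
  then have log_nonneg: "0 \<le> - ln (1 - R i) - ln 2"
    by (simp add: ln_div)
  have "ennreal (2 powr (-c) * (\<Prod>j\<in>{..<k}-{i}. 2 powr (-\<bar>b j\<bar>) / 2) * (- ln (1 - R i) - ln 2))
      = ennreal (2 powr (-c)) * (ennreal (- ln (1 - R i) - ln 2) *
          (\<Prod>j\<in>{..<k}-{i}. ennreal (2 powr (-\<bar>b j\<bar>) / 2)))"
    using log_nonneg by (simp add: ennreal_mult prod_ennreal prod_nonneg mult_ac)
  also have "\<dots> = ennreal (2 powr (-c)) * (\<Prod>j<k. \<integral>\<^sup>+ x. indicator (S j) x * ennreal (g j x) \<partial>lborel)"
    using i by (simp add: prod.remove one_dim_i one_dim_j)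
  also have "\<dots> \<le> hyper_g_integral k b c R"
  proof (rule hyper_g_integral_ge_prod)
    fix t :: "nat \<Rightarrow> real" assume t: "\<And>j. j < k \<Longrightarrow> t j \<in> S j"
    have t_i: "t i \<in> {1/2..R i}"
      using t[OF i] by (simp add: S_def)
    have t_j: "t j \<in> {0<..<1/2}" if "j < k" "j \<noteq> i" for j
      using t[OF that(1)] that(2) by (simp add: S_def)
    have "2 powr (-c) / (1 - t i) * (\<Prod>j\<in>{..<k}-{i}. 2 powr (-\<bar>b j\<bar>)) \<le> hyper_g_integrand k b c R t"
      by (rule hyper_g_integrand_ge_block[where b = b and i = i and t = t, OF i R_nonneg R_sum c bc t_i t_j])
    moreover have "(\<Prod>j<k. g j (t j)) = 1 / (1 - t i) * (\<Prod>j\<in>{..<k}-{i}. 2 powr (-\<bar>b j\<bar>))"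
      using i by (simp add: prod.remove g_def)
    ultimately show "2 powr (-c) * (\<Prod>j<k. g j (t j)) \<le> hyper_g_integrand k b c R t"
      by simp
  qed (use R_i_lt in \<open>auto simp: S_def g_def\<close>)
  finally show ?thesis .
qed

lemma hyper_g_integral_tendsto_top_joint:
  fixes R :: "nat \<Rightarrow> nat \<Rightarrow> real" and b :: "nat \<Rightarrow> real" and c :: real
  assumes R_nonneg: "\<And>m j. j < k \<Longrightarrow> 0 \<le> R m j" and R_sum: "\<And>m. (\<Sum>j<k. R m j) < 1"
    and R_lim: "(\<lambda>m. \<Sum>j<k. R m j) \<longlonglongrightarrow> 1"
    and c: "0 \<le> c" and exponent: "(\<Sum>j<k. b j + 1) < c"
  shows "(\<lambda>m. hyper_g_integral k b c (R m)) \<longlonglongrightarrow> top"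
proof -
  define d where "d m = 1 - (\<Sum>j<k. R m j)" for m
  define K where "K = 2 powr (-c) * (\<Prod>j<k. 2 powr (-\<bar>b j\<bar>) / 2)"
  have d_pos: "0 < d m" for m
    using R_sum[of m] by (simp add: d_def)
  have "d \<longlonglongrightarrow> 0"
    unfolding d_def using tendsto_diff[OF tendsto_const[of 1] R_lim] by simp
  then have d_at_right: "filterlim d (at_right 0) sequentially"
    using d_pos by (intro tendsto_imp_filterlim_at_right) auto
  have "0 < K"
    by (simp add: K_def prod_pos)
  moreover obtain E where E: "E = (\<Sum>j<k. b j + 1) - c" "E < 0"
    using exponent by simp
  ultimately have "filterlim (\<lambda>x. K * x powr E) at_top (at_right 0)"
    by real_asymp
  then have lower_to_top: "filterlim (\<lambda>m. K * d m powr ((\<Sum>j<k. b j + 1) - c)) at_top sequentially"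
    using d_at_right unfolding E(1) by (rule filterlim_compose)
  have "eventually (\<lambda>m. d m < 1) sequentially"
    using \<open>d \<longlonglongrightarrow> 0\<close> by (rule order_tendstoD) simp
  then have "eventually (\<lambda>m. ennreal (K * d m powr ((\<Sum>j<k. b j + 1) - c)) \<le> hyper_g_integral k b c (R m))
      sequentially"
  proof eventually_elim
    case (elim m)
    show ?case
      unfolding K_def using R_nonneg d_pos elim c
      by (intro hyper_g_integral_ge_joint) (auto simp: d_def)
  qed
  with lower_to_top show ?thesis
    by (rule tendsto_top_if_eventually_ge_ennreal)
qed

lemma hyper_g_integral_tendsto_top_block:
  fixes R :: "nat \<Rightarrow> nat \<Rightarrow> real" and b :: "nat \<Rightarrow> real" and c :: real
  assumes i: "i < k" and R_nonneg: "\<And>m j. j < k \<Longrightarrow> 0 \<le> R m j" and R_sum: "\<And>m. (\<Sum>j<k. R m j) < 1"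
    and R_lim: "(\<lambda>m. R m i) \<longlonglongrightarrow> 1"
    and c: "0 \<le> c" and bc: "b i - c \<le> -1"
  shows "(\<lambda>m. hyper_g_integral k b c (R m)) \<longlonglongrightarrow> top"
proof -
  define d where "d m = 1 - R m i" for m
  define K where "K = 2 powr (-c) * (\<Prod>j\<in>{..<k}-{i}. 2 powr (-\<bar>b j\<bar>) / 2)"
  have d_pos: "0 < d m" for m
  proof -
    have "R m i \<le> (\<Sum>j<k. R m j)"
      using i R_nonneg by (intro member_le_sum) auto
    then show ?thesis
      using R_sum[of m] by (simp add: d_def)
  qed
  have "d \<longlonglongrightarrow> 0"
    unfolding d_def using tendsto_diff[OF tendsto_const[of 1] R_lim] by simp
  then have d_at_right: "filterlim d (at_right 0) sequentially"
    using d_pos by (intro tendsto_imp_filterlim_at_right) auto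
  have "0 < K"
    by (simp add: K_def prod_pos)
  then have "filterlim (\<lambda>x. K * (- ln x - ln 2)) at_top (at_right 0)"
    by real_asymp
  then have lower_to_top: "filterlim (\<lambda>m. K * (- ln (d m) - ln 2)) at_top sequentially"
    using d_at_right by (rule filterlim_compose)
  have "eventually (\<lambda>m. d m < 1/2) sequentially"
    using \<open>d \<longlonglongrightarrow> 0\<close> by (rule order_tendstoD) simp
  then have "eventually (\<lambda>m. ennreal (K * (- ln (d m) - ln 2)) \<le> hyper_g_integral k b c (R m)) sequentially"
  proof eventually_elim
    case (elim m)
    show ?case
      unfolding K_def d_def using i R_nonneg R_sum elim c bc
      by (intro hyper_g_integral_ge_block) (auto simp: d_def)
  qed
  with lower_to_top show ?thesis
    by (rule tendsto_top_if_eventually_ge_ennreal)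
qed

theorem theorem5p1:
  fixes n k :: nat and a :: real and p :: "nat \<Rightarrow> nat"
    and r :: "nat \<Rightarrow> nat \<Rightarrow> real"
  assumes k_pos: "k \<ge> 1"
    and a_range: "2 < a" "a \<le> 4"
    and p_pos: "\<And>j. j < k \<Longrightarrow> p j \<ge> 1"
    and full_rank: "(\<Sum>j<k. p j) + 1 \<le> n"
    and r_nonneg: "\<And>m j. j < k \<Longrightarrow> 0 \<le> r m j"
    and r_lt1: "\<And>m. (\<Sum>j<k. r m j) < 1"
    and conds:
      "((\<lambda>m. \<Sum>j<k. r m j) \<longlonglongrightarrow> 1 \<and>
          real n > real k * (a - 2) + real (\<Sum>j<k. p j) + 1)
       \<or> (\<exists>i<k. (\<lambda>m. r m i) \<longlonglongrightarrow> 1 \<and> real n \<ge> a + real (p i) - 1)"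
  shows "(\<lambda>m. block_hyper_g_BF n a k p (r m)) \<longlonglongrightarrow> \<infinity>"
proof -
  define b where "b = (\<lambda>j. (a + real (p j)) / 2 - 2)"
  define c where "c = (real n - 1) / 2"
  have c_nonneg: "0 \<le> c"
    using full_rank by (simp add: c_def)
  have "(\<lambda>m. hyper_g_integral k b c (r m)) \<longlonglongrightarrow> top"
    using conds
  proof (elim disjE conjE exE)
    assume R_lim: "(\<lambda>m. \<Sum>j<k. r m j) \<longlonglongrightarrow> 1"
      and n_large: "real k * (a - 2) + real (\<Sum>j<k. p j) + 1 < real n"
    have "(\<Sum>j<k. b j + 1) = (\<Sum>j<k. (a - 2) / 2 + real (p j) / 2)"
      by (simp add: b_def field_simps)
    also have "\<dots> = real k * (a - 2) / 2 + real (\<Sum>j<k. p j) / 2"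
      by (simp add: sum.distrib sum_divide_distrib[symmetric])
    finally show ?thesis
      using r_nonneg r_lt1 R_lim c_nonneg n_large
      by (intro hyper_g_integral_tendsto_top_joint) (auto simp: c_def)
  next
    fix i assume "i < k" "(\<lambda>m. r m i) \<longlonglongrightarrow> 1" "a + real (p i) - 1 \<le> real n"
    then show ?thesis
      using r_nonneg r_lt1 c_nonneg
      by (intro hyper_g_integral_tendsto_top_block[where i = i]) (auto simp: b_def c_def field_simps)
  qed
  then have "(\<lambda>m. ennreal (((a - 2) / 2) ^ k) * hyper_g_integral k b c (r m))
      \<longlonglongrightarrow> ennreal (((a - 2) / 2) ^ k) * top"
    by (intro ennreal_tendsto_cmult) simp_all
  then show ?thesis
    using a_range by (simp add: block_hyper_g_BF_eq b_def c_def ennreal_top_mult_left)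
qed

end
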